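(* Let $G$ be a locally compact group and $K$ a compact subgroup with normalized Haar measure $\lambda_K$. Put $L_{K0}=\{\mu\in L^1(G/K):\ \lambda_K\star\mu=0\}$. If $L_{K0}$ is finite dimensional, then either $K$ is normal in $G$ or $G/K$ is finite.
   Context: $M(G)$ denotes the measure algebra of $G$ with ordinary convolution $\star$ and $L^1(G)$ the group algebra (absolutely continuous measures with respect to Haar measure). $L^1(G/K)$ is identified with $L^1(G)\star\lambda_K\subseteq M(G)$ (right $K$-invariant elements), and $M(G/K)$ with $M(G)\star\lambda_K$. *)

theory Defs
  imports "HOL-Analysis.Analysis"
begin

text \<open>Groups are written additively (type class group_add, not necessarily
commutative). A left Haar measure of a closed subgroup S (Radon, as a Borel
measure on the ambient group, concentrated on S, invariant under left
translations by elements of S).\<close>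

definition left_haar_on :: "'g::{topological_group_add} set \<Rightarrow> 'g measure \<Rightarrow> bool" where
  "left_haar_on S M \<longleftrightarrow>
     sets M = sets borel \<and>
     emeasure M (- S) = 0 \<and>
     (\<forall>x\<in>S. \<forall>A\<in>sets borel. emeasure M ((\<lambda>y. x + y) ` A) = emeasure M A) \<and>
     (\<forall>C. compact C \<longrightarrow> emeasure M C < \<infinity>) \<and>
     (\<forall>U. open U \<and> U \<inter> S \<noteq> {} \<longrightarrow> emeasure M U > 0) \<and>
     (\<forall>A\<in>sets borel. emeasure M A = (INF U\<in>{U. open U \<and> A \<subseteq> U}. emeasure M U)) \<and>
     (\<forall>U. open U \<longrightarrow> emeasure M U = (SUP C\<in>{C. compact C \<and> C \<subseteq> U}. emeasure M C))"

definition subgroup_of :: "'g::group_add set \<Rightarrow> bool" where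
  "subgroup_of K \<longleftrightarrow> 0 \<in> K \<and> (\<forall>a\<in>K. \<forall>b\<in>K. a + b \<in> K) \<and> (\<forall>a\<in>K. - a \<in> K)"

text \<open>Density (w.r.t. Haar measure of G) of the convolution lambda_K * (f dx):
  (lambda_K * f)(y) = integral over K of f(-k + y) d lambda_K(k).\<close>
definition conv_left :: "'g::group_add measure \<Rightarrow> ('g \<Rightarrow> complex) \<Rightarrow> 'g \<Rightarrow> complex" where
  "conv_left lK f = (\<lambda>y. \<integral>k. f (- k + y) \<partial>lK)"

text \<open>Density of the convolution (f dx) * lambda_K:
  (f * lambda_K)(y) = integral over K of f(y - k) d lambda_K(k)
  (the modular function is 1 on the compact group K).\<close>
definition conv_right :: "('g::group_add \<Rightarrow> complex) \<Rightarrow> 'g measure \<Rightarrow> 'g \<Rightarrow> complex" where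
  "conv_right f lK = (\<lambda>y. \<integral>k. f (y - k) \<partial>lK)"

text \<open>L^1(G/K) = L^1(G) * lambda_K, represented by densities.\<close>
definition L1_quot :: "'g::group_add measure \<Rightarrow> 'g measure \<Rightarrow> ('g \<Rightarrow> complex) set" where
  "L1_quot hG lK = {conv_right f lK | f. integrable hG f}"

definition L_K0 :: "'g::group_add measure \<Rightarrow> 'g measure \<Rightarrow> ('g \<Rightarrow> complex) set" where
  "L_K0 hG lK = {h \<in> L1_quot hG lK. AE y in hG. conv_left lK h y = 0}"

text \<open>A set V of L^1 functions spans a finite dimensional (complex) subspace of
L^1(G) (elements identified when equal a.e.).\<close>
definition fin_dim_L1 :: "'g measure \<Rightarrow> ('g \<Rightarrow> complex) set \<Rightarrow> bool" where
  "fin_dim_L1 hG V \<longleftrightarrow> (\<exists>F. finite F \<and> F \<subseteq> V \<and>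
     (\<forall>h\<in>V. \<exists>c. AE y in hG. h y = (\<Sum>g\<in>F. c g * g y)))"

end

theory Submission
  imports Defs
begin

text \<open>
  Suppose that \<open>K\<close> is not normal and that \<open>G/K\<close> is infinite. Then for every \<open>n\<close> there are
  \<open>n\<close> distinct cosets \<open>y\<^sub>i K\<close> and elements \<open>k\<^sub>i \<in> K\<close> such that no coset \<open>k\<^sub>i y\<^sub>i K\<close> is
  among them: otherwise every \<open>K\<close>-orbit on \<open>G/K\<close> is finite and only finitely many orbits are
  non-trivial, which forces \<open>G/K\<close> to be finite. Local compactness provides open right
  \<open>K\<close>-saturated neighbourhoods \<open>A\<^sub>i\<close> of \<open>y\<^sub>i K\<close> inside pairwise disjoint compact sets \<open>C\<^sub>i\<close>
  that avoid every \<open>k\<^sub>j y\<^sub>j K\<close>. The functions \<open>h\<^sub>i = 1\<^sub>A\<^sub>i - \<lambda>\<^sub>K \<star> 1\<^sub>A\<^sub>i\<close> lie in \<open>L\<^sub>K\<^sub>0\<close>,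
  and they are linearly independent. Indeed, let \<open>\<Sum> a\<^sub>i h\<^sub>i = 0\<close> almost everywhere with \<open>|a\<^sub>j|\<close>
  maximal, and take a point \<open>x \<in> A\<^sub>j\<close> with \<open>k\<^sub>j x \<notin> \<Union> C\<^sub>i\<close> at which the relation holds.
  There \<open>a\<^sub>j = \<Sum> a\<^sub>i (\<lambda>\<^sub>K \<star> 1\<^sub>A\<^sub>i)(x)\<close>, where \<open>(\<lambda>\<^sub>K \<star> 1\<^sub>A)(x) = \<lambda>\<^sub>K {k. k\<inverse> x \<in> A}\<close>;
  these weights sum to less than \<open>1\<close>, because the open set of all \<open>k\<close> with
  \<open>k\<inverse> x \<notin> \<Union> C\<^sub>i\<close> contains \<open>k\<^sub>j\<inverse>\<close> and so has positive \<open>\<lambda>\<^sub>K\<close>-measure. Hence \<open>a = 0\<close>.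
\<close>

definition left_coset :: "'g::plus set \<Rightarrow> 'g \<Rightarrow> 'g set" where
  "left_coset K y = (\<lambda>k. y + k) ` K"

definition double_coset :: "'g::plus set \<Rightarrow> 'g \<Rightarrow> 'g set" where
  "double_coset K y = {a + y + b | a b. a \<in> K \<and> b \<in> K}"

definition right_saturated :: "'g::plus set \<Rightarrow> 'g set \<Rightarrow> bool" where
  "right_saturated K A \<longleftrightarrow> (\<forall>a\<in>A. \<forall>k\<in>K. a + k \<in> A)"

definition moved_points :: "'g::plus set \<Rightarrow> 'g set" where
  "moved_points K = {y. \<exists>k\<in>K. left_coset K (k + y) \<noteq> left_coset K y}"

definition escaping_cosets :: "'g::plus set \<Rightarrow> 'g set \<Rightarrow> bool" where
  "escaping_cosets K Y \<longleftrightarrow> inj_on (left_coset K) Y \<and>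
     (\<forall>y\<in>Y. \<exists>k\<in>K. left_coset K (k + y) \<notin> left_coset K ` Y)"

lemma subgroup_of_zero: "subgroup_of K \<Longrightarrow> 0 \<in> K"
  and subgroup_of_add: "subgroup_of K \<Longrightarrow> a \<in> K \<Longrightarrow> b \<in> K \<Longrightarrow> a + b \<in> K"
  and subgroup_of_uminus: "subgroup_of K \<Longrightarrow> a \<in> K \<Longrightarrow> - a \<in> K"
  unfolding subgroup_of_def by blast+

section \<open>Compact saturated neighbourhoods\<close>

lemma Hausdorff_space_euclidean_t2: "Hausdorff_space (euclidean :: 'a::t2_space topology)"
  unfolding Hausdorff_space_def disjnt_def open_openin[symmetric] using hausdorff by blast

lemma locally_compact_compact_nhd:
  fixes W :: "'a::t2_space set"
  assumes "locally_compact_space (euclidean :: 'a topology)" "open W" "x \<in> W"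
  obtains U C where "open U" "compact C" "x \<in> U" "U \<subseteq> C" "C \<subseteq> W"
proof -
  have "neighbourhood_base_of (compactin euclidean) (euclidean :: 'a topology)"
    using assms(1) locally_compact_space_neighbourhood_base Hausdorff_space_euclidean_t2 by blast
  then show thesis
    using assms(2,3) that unfolding neighbourhood_base_of open_openin[symmetric] compactin_euclidean_iff
    by blast
qed

lemma open_Collect_Ball_compact:
  fixes g :: "'a::topological_space \<Rightarrow> 'b::topological_space \<Rightarrow> 'c::topological_space"
  assumes "compact C" "open A" "continuous_on UNIV (\<lambda>p. g (fst p) (snd p))"
  shows "open {x. \<forall>c\<in>C. g x c \<in> A}"
proof (subst open_subopen, intro ballI)
  fix x0 assume "x0 \<in> {x. \<forall>c\<in>C. g x c \<in> A}"
  then have "{x0} \<times> C \<subseteq> (\<lambda>p. g (fst p) (snd p)) -` A"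
    by auto
  moreover have "open ((\<lambda>p. g (fst p) (snd p)) -` A)"
    using assms(2,3) by (rule open_vimage)
  ultimately obtain X0 where "x0 \<in> X0" "open X0" "X0 \<times> C \<subseteq> (\<lambda>p. g (fst p) (snd p)) -` A"
    using Elementary_Topology.tube_lemma[OF assms(1)] by blast
  then show "\<exists>T. open T \<and> x0 \<in> T \<and> T \<subseteq> {x. \<forall>c\<in>C. g x c \<in> A}"
    by (intro exI[of _ X0]) auto
qed

lemma open_set_plus:
  fixes U K :: "'g::topological_group_add set"
  assumes "open U"
  shows "open (U + K)"
proof -
  have "U + K = (\<Union>k\<in>K. (\<lambda>x. x - k) -` U)"
  proof (intro set_eqI iffI)
    fix x assume "x \<in> U + K"
    then obtain u k where "x = u + k" "u \<in> U" "k \<in> K"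
      by (rule set_plus_elim)
    then have "x - k \<in> U"
      by simp
    then show "x \<in> (\<Union>k\<in>K. (\<lambda>x. x - k) -` U)"
      using \<open>k \<in> K\<close> by blast
  next
    fix x assume "x \<in> (\<Union>k\<in>K. (\<lambda>x. x - k) -` U)"
    then obtain k where "x - k \<in> U" "k \<in> K"
      by blast
    then have "x - k + k \<in> U + K"
      by (rule set_plus_intro)
    then show "x \<in> U + K"
      by simp
  qed
  moreover have "open ((\<lambda>x. x - k) -` U)" for k
    using assms by (rule open_vimage) (intro continuous_intros)
  ultimately show ?thesis
    by (simp add: open_UN)
qed

lemma compact_set_plus:
  fixes A B :: "'g::topological_monoid_add set"
  assumes "compact A" "compact B"
  shows "compact (A + B)"
proof -
  have "A + B = (\<lambda>p. fst p + snd p) ` (A \<times> B)"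
    unfolding set_plus_def by (auto simp: image_iff) blast+
  moreover have "continuous_on (A \<times> B) (\<lambda>p. fst p + snd p)"
    by (intro continuous_intros)
  ultimately show ?thesis
    using compact_continuous_image compact_Times[OF assms] by metis
qed

lemma open_orbit_set:
  fixes A :: "'g::topological_group_add set"
  shows "open A \<Longrightarrow> open {k. - k + x \<in> A}"
  using open_vimage[of A "\<lambda>k. - k + x"] by (simp add: vimage_def continuous_intros)

lemma compact_left_coset:
  fixes K :: "'g::topological_monoid_add set"
  shows "compact K \<Longrightarrow> compact (left_coset K y)"
  unfolding left_coset_def by (rule compact_continuous_image) (intro continuous_intros)

lemma saturated_compact_nhd:
  fixes K W :: "'g::{topological_group_add,t2_space} set"
  assumes lc: "locally_compact_space (euclidean :: 'g topology)"
    and K: "subgroup_of K" "compact K" and W: "open W" "left_coset K y \<subseteq> W"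
  obtains A C where "open A" "compact C" "left_coset K y \<subseteq> A" "A \<subseteq> C" "C \<subseteq> W"
    "right_saturated K A"
proof -
  define V where "V = {x. \<forall>k\<in>K. x + k \<in> W}"
  have "open V"
    unfolding V_def using K(2) W(1) by (rule open_Collect_Ball_compact) (intro continuous_intros)
  moreover have "y \<in> V"
    using W(2) by (auto simp: V_def left_coset_def)
  ultimately obtain U Q where UQ: "open U" "compact Q" "y \<in> U" "U \<subseteq> Q" "Q \<subseteq> V"
    by (rule locally_compact_compact_nhd[OF lc])
  show thesis
  proof
    show "open (U + K)"
      using UQ(1) by (rule open_set_plus)
    show "compact (Q + K)"
      using UQ(2) K(2) by (rule compact_set_plus)
    show "U + K \<subseteq> Q + K"
      using UQ(4) by (rule set_plus_mono2) (rule order_refl)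
    show "left_coset K y \<subseteq> U + K"
      unfolding left_coset_def using UQ(3) set_plus_intro by blast
    show "Q + K \<subseteq> W"
    proof
      fix x assume "x \<in> Q + K"
      then obtain q k where "x = q + k" "q \<in> Q" "k \<in> K"
        by (rule set_plus_elim)
      then show "x \<in> W"
        using UQ(5) unfolding V_def by blast
    qed
    show "right_saturated K (U + K)"
      unfolding right_saturated_def
    proof (intro ballI)
      fix a k assume "a \<in> U + K" "k \<in> K"
      from \<open>a \<in> U + K\<close> obtain u k' where "a = u + k'" "u \<in> U" "k' \<in> K"
        by (rule set_plus_elim)
      then show "a + k \<in> U + K"
        using subgroup_of_add[OF K(1) \<open>k' \<in> K\<close> \<open>k \<in> K\<close>]
        by (simp add: add.assoc set_plus_intro)
    qed
  qed
qed

lemma closed_UN_compact: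
  fixes F :: "'i \<Rightarrow> 'a::t2_space set"
  shows "finite I \<Longrightarrow> (\<And>i. i \<in> I \<Longrightarrow> compact (F i)) \<Longrightarrow> closed (\<Union>i\<in>I. F i)"
  using compact_imp_closed by (intro closed_UN) auto

lemma saturated_compact_nhds:
  fixes K :: "'g::{topological_group_add,t2_space} set"
  assumes lc: "locally_compact_space (euclidean :: 'g topology)"
    and K: "subgroup_of K" "compact K"
    and W: "\<And>y. y \<in> Y \<Longrightarrow> open (W y)" "\<And>y. y \<in> Y \<Longrightarrow> left_coset K y \<subseteq> W y"
  obtains A C where "\<And>y. y \<in> Y \<Longrightarrow> open (A y) \<and> compact (C y) \<and> left_coset K y \<subseteq> A y \<and>
    A y \<subseteq> C y \<and> C y \<subseteq> W y \<and> right_saturated K (A y)"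
proof -
  have "\<exists>A C. open A \<and> compact C \<and> left_coset K y \<subseteq> A \<and> A \<subseteq> C \<and> C \<subseteq> W y \<and>
      right_saturated K A" if "y \<in> Y" for y
    using saturated_compact_nhd[OF lc K W(1)[OF that] W(2)[OF that]] by (metis (no_types))
  then show thesis
    using that by metis
qed

section \<open>Left cosets and double cosets\<close>

lemma left_coset_translate:
  fixes K :: "'g::semigroup_add set"
  shows "(\<lambda>v. a + v) ` left_coset K y = left_coset K (a + y)"
  unfolding left_coset_def image_image by (simp add: add.assoc)

lemma mem_left_coset_iff:
  fixes K :: "'g::group_add set"
  shows "x \<in> left_coset K y \<longleftrightarrow> - y + x \<in> K"
  unfolding left_coset_def by (force simp: add.assoc[symmetric])

context
  fixes K :: "'g::group_add set"
  assumes subgroup: "subgroup_of K"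
begin

lemma right_saturated_add_iff:
  assumes "right_saturated K A" "k \<in> K"
  shows "a + k \<in> A \<longleftrightarrow> a \<in> A"
proof
  assume "a + k \<in> A"
  then have "a + k + - k \<in> A"
    using assms subgroup_of_uminus[OF subgroup] unfolding right_saturated_def by blast
  then show "a \<in> A"
    by (simp add: add.assoc)
qed (use assms in \<open>auto simp: right_saturated_def\<close>)

lemma left_coset_self: "y \<in> left_coset K y"
  using subgroup_of_zero[OF subgroup] by (simp add: mem_left_coset_iff)

lemma left_coset_eq_iff: "left_coset K y = left_coset K y' \<longleftrightarrow> y' \<in> left_coset K y"
proof
  assume "y' \<in> left_coset K y"
  then have k: "- y + y' \<in> K"
    by (simp add: mem_left_coset_iff)
  have "- y' + x \<in> K \<longleftrightarrow> - y + x \<in> K" for x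
  proof
    assume "- y' + x \<in> K"
    with k have "(- y + y') + (- y' + x) \<in> K"
      by (rule subgroup_of_add[OF subgroup])
    then show "- y + x \<in> K"
      by (simp add: add.assoc)
  next
    assume "- y + x \<in> K"
    with subgroup_of_uminus[OF subgroup k] have "- (- y + y') + (- y + x) \<in> K"
      by (rule subgroup_of_add[OF subgroup])
    then show "- y' + x \<in> K"
      by (simp add: add.assoc minus_add)
  qed
  then show "left_coset K y = left_coset K y'"
    by (auto simp: mem_left_coset_iff)
qed (use left_coset_self in blast)

lemma left_coset_disjoint:
  "left_coset K y \<noteq> left_coset K y' \<Longrightarrow> left_coset K y \<inter> left_coset K y' = {}"
  using left_coset_eq_iff by (metis disjoint_iff)

lemma left_coset_add_right: "k \<in> K \<Longrightarrow> left_coset K (y + k) = left_coset K y"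
  using left_coset_eq_iff by (metis mem_left_coset_iff subgroup_of_uminus[OF subgroup] minus_add_cancel add.assoc)

lemma double_coset_self: "y \<in> double_coset K y"
  unfolding double_coset_def using subgroup_of_zero[OF subgroup] by force

lemma left_add_mem_double_coset: "k \<in> K \<Longrightarrow> k + y \<in> double_coset K y"
  unfolding double_coset_def using subgroup_of_zero[OF subgroup] by force

lemma double_coset_eq:
  assumes "w \<in> double_coset K y"
  shows "double_coset K w = double_coset K y"
proof -
  obtain a b where ab: "a \<in> K" "b \<in> K" "w = a + y + b"
    using assms unfolding double_coset_def by blast
  have "v \<in> double_coset K w \<longleftrightarrow> v \<in> double_coset K y" for v
  proof
    assume "v \<in> double_coset K w"
    then obtain c d where "c \<in> K" "d \<in> K" "v = c + w + d"
      unfolding double_coset_def by blast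
    moreover have "c + w + d = (c + a) + y + (b + d)"
      using ab by (simp add: add.assoc)
    ultimately show "v \<in> double_coset K y"
      using ab subgroup_of_add[OF subgroup] unfolding double_coset_def by auto
  next
    assume "v \<in> double_coset K y"
    then obtain c d where "c \<in> K" "d \<in> K" "v = c + y + d"
      unfolding double_coset_def by blast
    moreover have "c + y + d = (c + - a) + w + (- b + d)"
      using ab by (simp add: add.assoc del: add_uminus_conv_diff)
    moreover have "c + - a \<in> K" "- b + d \<in> K"
      using ab \<open>c \<in> K\<close> \<open>d \<in> K\<close> subgroup_of_add[OF subgroup] subgroup_of_uminus[OF subgroup]
      by blast+
    ultimately show "v \<in> double_coset K w"
      unfolding double_coset_def by blast
  qed
  then show ?thesis
    by blast
qed

lemma left_coset_subset_double_coset: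
  assumes "v \<in> double_coset K y"
  shows "left_coset K v \<subseteq> double_coset K y"
proof
  fix x assume "x \<in> left_coset K v"
  then obtain k where "k \<in> K" "x = v + k"
    unfolding left_coset_def by blast
  moreover obtain a b where "a \<in> K" "b \<in> K" "v = a + y + b"
    using assms unfolding double_coset_def by blast
  ultimately show "x \<in> double_coset K y"
    using subgroup_of_add[OF subgroup] unfolding double_coset_def by (force simp: add.assoc)
qed

lemma left_coset_in_double_coset:
  assumes "v \<in> double_coset K y"
  obtains k where "k \<in> K" "left_coset K v = left_coset K (k + y)"
  using assms left_coset_add_right unfolding double_coset_def by blast

lemma uminus_mem_double_coset: "x \<in> double_coset K (- y) \<Longrightarrow> - x \<in> double_coset K y"
proof -
  assume "x \<in> double_coset K (- y)"
  then obtain a b where "a \<in> K" "b \<in> K" "x = a + - y + b"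
    unfolding double_coset_def by blast
  moreover have "- (a + - y + b) = - b + y + - a"
    by (simp add: minus_add add.assoc del: add_uminus_conv_diff)
  moreover have "- b \<in> K" "- a \<in> K"
    using \<open>a \<in> K\<close> \<open>b \<in> K\<close> subgroup_of_uminus[OF subgroup] by blast+
  ultimately show "- x \<in> double_coset K y"
    unfolding double_coset_def by blast
qed

lemma double_coset_uminus: "double_coset K (- y) = uminus ` double_coset K y"
proof (intro set_eqI iffI)
  fix x assume "x \<in> double_coset K (- y)"
  then have "- x \<in> double_coset K y"
    by (rule uminus_mem_double_coset)
  then show "x \<in> uminus ` double_coset K y"
    by (rule rev_image_eqI) simp
next
  fix x assume "x \<in> uminus ` double_coset K y"
  then have "- x \<in> double_coset K (- (- y))"
    by auto
  then show "x \<in> double_coset K (- y)"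
    using uminus_mem_double_coset by fastforce
qed

lemma not_mem_moved_points_iff: "y \<notin> moved_points K \<longleftrightarrow> (\<forall>k\<in>K. - y + k + y \<in> K)"
proof -
  have "left_coset K (k + y) = left_coset K y \<longleftrightarrow> - y + - k + y \<in> K" for k
    using left_coset_eq_iff[of "k + y" y]
    by (simp add: mem_left_coset_iff minus_add add.assoc del: add_uminus_conv_diff)
  then have "y \<notin> moved_points K \<longleftrightarrow> (\<forall>k\<in>K. - y + - k + y \<in> K)"
    unfolding moved_points_def by blast
  also have "\<dots> \<longleftrightarrow> (\<forall>k\<in>K. - y + k + y \<in> K)"
    using subgroup_of_uminus[OF subgroup] by (metis minus_minus)
  finally show ?thesis .
qed

lemma add_not_mem_moved_points:
  assumes "y \<notin> moved_points K" "z \<notin> moved_points K"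
  shows "y + z \<notin> moved_points K"
proof -
  have "- (y + z) + k + (y + z) \<in> K" if "k \<in> K" for k
  proof -
    have "- z + (- y + k + y) + z \<in> K"
      using assms that by (simp add: not_mem_moved_points_iff)
    then show ?thesis
      by (simp add: minus_add add.assoc del: add_uminus_conv_diff)
  qed
  then show ?thesis
    by (simp add: not_mem_moved_points_iff)
qed

lemma moved_points_nonempty:
  assumes "\<not> (\<forall>x. \<forall>k\<in>K. x + k - x \<in> K)"
  obtains b where "b \<in> moved_points K"
proof -
  obtain x k where "k \<in> K" "x + k - x \<notin> K"
    using assms by blast
  then have "\<not> (\<forall>k\<in>K. - (- x) + k + - x \<in> K)"
    by auto
  then have "- x \<in> moved_points K"
    using not_mem_moved_points_iff by blast
  then show thesis
    by (rule that)
qed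

lemma finite_left_cosets_of_double_cosets:
  assumes "\<And>y. finite (left_coset K ` double_coset K y)" "finite (double_coset K ` S)"
  shows "finite (left_coset K ` S)"
proof (rule finite_subset)
  show "left_coset K ` S \<subseteq> \<Union> ((\<lambda>D. left_coset K ` D) ` double_coset K ` S)"
    using double_coset_self by blast
  show "finite (\<Union> ((\<lambda>D. left_coset K ` D) ` double_coset K ` S))"
  proof (rule finite_Union)
    show "finite ((\<lambda>D. left_coset K ` D) ` double_coset K ` S)"
      using assms(2) by (rule finite_imageI)
  qed (use assms(1) in blast)
qed

lemma finite_range_left_coset:
  assumes "\<not> (\<forall>x. \<forall>k\<in>K. x + k - x \<in> K)"
    and "\<And>y. finite (left_coset K ` double_coset K y)"
    and "finite (double_coset K ` moved_points K)"
  shows "finite (range (left_coset K))"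
proof -
  obtain b where b: "b \<in> moved_points K"
    using moved_points_nonempty[OF assms(1)] .
  define E where "E = moved_points K \<union> uminus ` moved_points K"
  have "double_coset K ` uminus ` moved_points K = (\<lambda>D. uminus ` D) ` double_coset K ` moved_points K"
    by (simp add: image_image double_coset_uminus)
  then have "finite (double_coset K ` uminus ` moved_points K)"
    using assms(3) by simp
  then have fin: "finite (left_coset K ` E)"
    unfolding E_def image_Un
    using finite_left_cosets_of_double_cosets assms(2,3) by blast
  \<comment> \<open>the points outside \<open>moved_points K\<close> form a submonoid that does not contain \<open>b\<close>\<close>
  have "x \<in> E \<or> b + x \<in> E" for x
  proof (rule ccontr)
    assume "\<not> (x \<in> E \<or> b + x \<in> E)"
    then have "b + x \<notin> moved_points K" "- x \<notin> moved_points K"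
      unfolding E_def by (auto simp: image_iff intro: exI[of _ "- x"])
    then have "b + x + - x \<notin> moved_points K"
      by (rule add_not_mem_moved_points)
    then show False
      using b by (simp add: add.assoc)
  qed
  then have "range (left_coset K) \<subseteq> left_coset K ` E \<union> (\<lambda>C. (\<lambda>v. - b + v) ` C) ` left_coset K ` E"
    using left_coset_translate[of "- b" K "b + _"] by (force simp: add.assoc)
  then show ?thesis
    using fin finite_subset by blast
qed

lemma escaping_cosets_in_infinite_orbit:
  assumes "infinite (left_coset K ` double_coset K y0)"
  obtains Y where "finite Y" "card Y = n" "escaping_cosets K Y"
proof -
  obtain S where S: "S \<subseteq> left_coset K ` double_coset K y0" "finite S" "card S = n"
    using infinite_arbitrarily_large[OF assms] by blast
  then obtain Y where Y: "Y \<subseteq> double_coset K y0" "inj_on (left_coset K) Y" "S = left_coset K ` Y"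
    unfolding subset_image_inj by blast
  have "\<exists>k\<in>K. left_coset K (k + y) \<notin> left_coset K ` Y" if "y \<in> Y" for y
  proof -
    have "double_coset K y = double_coset K y0"
      using Y(1) that double_coset_eq by blast
    then have "left_coset K ` double_coset K y - S \<noteq> {}"
      using assms S(2) by (intro infinite_imp_nonempty) (simp add: Diff_infinite_finite)
    then obtain v where v: "v \<in> double_coset K y" "left_coset K v \<notin> S"
      by blast
    obtain k where "k \<in> K" "left_coset K v = left_coset K (k + y)"
      using v(1) by (rule left_coset_in_double_coset)
    then show ?thesis
      using v(2) Y(3) by auto
  qed
  then show thesis
    using that Y S by (simp add: escaping_cosets_def card_image finite_image_iff)
qed

lemma escaping_cosets_in_infinitely_many_orbits:
  assumes "infinite (double_coset K ` moved_points K)"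
  obtains Y where "finite Y" "card Y = n" "escaping_cosets K Y"
proof -
  obtain D where D: "D \<subseteq> double_coset K ` moved_points K" "finite D" "card D = n"
    using infinite_arbitrarily_large[OF assms] by blast
  then obtain Y where Y: "Y \<subseteq> moved_points K" "inj_on (double_coset K) Y" "D = double_coset K ` Y"
    unfolding subset_image_inj by blast
  have same_orbit: "y' = y" if "y \<in> Y" "y' \<in> Y" "left_coset K y' \<subseteq> double_coset K y" for y y'
    using Y(2) that double_coset_eq left_coset_self
    by (metis inj_on_eq_iff subsetD)
  have inj: "inj_on (left_coset K) Y"
    using same_orbit left_coset_subset_double_coset double_coset_self
    by (metis inj_onI)
  have "\<exists>k\<in>K. left_coset K (k + y) \<notin> left_coset K ` Y" if y: "y \<in> Y" for y
  proof -
    obtain k where k: "k \<in> K" "left_coset K (k + y) \<noteq> left_coset K y"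
      using Y(1) y unfolding moved_points_def by blast
    have "left_coset K (k + y) \<subseteq> double_coset K y"
      using left_add_mem_double_coset[OF k(1)] by (rule left_coset_subset_double_coset)
    then have "left_coset K (k + y) \<noteq> left_coset K y'" if "y' \<in> Y" for y'
      using same_orbit[OF y that] k(2) by auto
    then show ?thesis
      using k(1) by blast
  qed
  then show thesis
    using that inj Y D by (simp add: escaping_cosets_def card_image finite_image_iff)
qed

lemma escaping_cosets_exist:
  assumes "\<not> (\<forall>x. \<forall>k\<in>K. x + k - x \<in> K)" and "infinite (range (left_coset K))"
  obtains Y where "finite Y" "card Y = n" "escaping_cosets K Y"
proof (cases "\<exists>y0. infinite (left_coset K ` double_coset K y0)")
  case True
  then show thesis
    using escaping_cosets_in_infinite_orbit that by blast
next
  case False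
  then have "infinite (double_coset K ` moved_points K)"
    using finite_range_left_coset assms by blast
  then show thesis
    using escaping_cosets_in_infinitely_many_orbits that by blast
qed

end

lemma saturated_compact_nhds_avoiding:
  fixes K Z :: "'g::{topological_group_add,t2_space} set"
  assumes lc: "locally_compact_space (euclidean :: 'g topology)"
    and K: "subgroup_of K" "compact K"
    and Y: "finite Y" "inj_on (left_coset K) Y"
    and Z: "closed Z" "\<And>y. y \<in> Y \<Longrightarrow> left_coset K y \<inter> Z = {}"
  obtains A C where "\<And>y. y \<in> Y \<Longrightarrow> open (A y) \<and> compact (C y) \<and> left_coset K y \<subseteq> A y \<and>
      A y \<subseteq> C y \<and> C y \<subseteq> - (Z \<union> (\<Union>y'\<in>Y - {y}. left_coset K y')) \<and> right_saturated K (A y)"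
proof -
  have W_open: "open (- (Z \<union> (\<Union>y'\<in>Y - {y}. left_coset K y')))" for y
    using Y(1) by (intro open_Compl closed_Un Z(1) closed_UN_compact compact_left_coset K(2)) auto
  have W_coset: "left_coset K y \<subseteq> - (Z \<union> (\<Union>y'\<in>Y - {y}. left_coset K y'))" if "y \<in> Y" for y
  proof -
    have "left_coset K y \<inter> left_coset K y' = {}" if "y' \<in> Y - {y}" for y'
    proof (rule left_coset_disjoint[OF K(1)])
      show "left_coset K y \<noteq> left_coset K y'"
        using that \<open>y \<in> Y\<close> inj_onD[OF Y(2)] by blast
    qed
    then show ?thesis
      using Z(2)[OF that] by blast
  qed
  show thesis
    using saturated_compact_nhds[OF lc K W_open W_coset] that by blast
qed

lemma disjoint_saturated_compact_nhds:
  fixes K Z :: "'g::{topological_group_add,t2_space} set"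
  assumes lc: "locally_compact_space (euclidean :: 'g topology)"
    and K: "subgroup_of K" "compact K"
    and Y: "finite Y" "inj_on (left_coset K) Y"
    and Z: "closed Z" "\<And>y. y \<in> Y \<Longrightarrow> left_coset K y \<inter> Z = {}"
  obtains A C where "\<And>y. y \<in> Y \<Longrightarrow> open (A y)" "\<And>y. y \<in> Y \<Longrightarrow> compact (C y)"
    "\<And>y. y \<in> Y \<Longrightarrow> y \<in> A y" "\<And>y. y \<in> Y \<Longrightarrow> A y \<subseteq> C y" "\<And>y. y \<in> Y \<Longrightarrow> C y \<inter> Z = {}"
    "\<And>y. y \<in> Y \<Longrightarrow> right_saturated K (A y)" "disjoint_family_on C Y"
proof -
  obtain A1 C1 where AC1: "\<And>y. y \<in> Y \<Longrightarrow> open (A1 y) \<and> compact (C1 y) \<and> left_coset K y \<subseteq> A1 y \<and>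
      A1 y \<subseteq> C1 y \<and> C1 y \<subseteq> - (Z \<union> (\<Union>y'\<in>Y - {y}. left_coset K y')) \<and> right_saturated K (A1 y)"
    using saturated_compact_nhds_avoiding[OF lc K Y Z] by blast
  have A1_C1: "A1 y \<subseteq> C1 y" and C1_avoids: "C1 y \<subseteq> - (Z \<union> (\<Union>y'\<in>Y - {y}. left_coset K y'))"
    if "y \<in> Y" for y
    using AC1[OF that] by simp_all
  define W where "W y = A1 y - (\<Union>y'\<in>Y - {y}. C1 y')" for y
  have W_open: "open (W y)" if "y \<in> Y" for y
    unfolding W_def using AC1 that Y(1) by (intro open_Diff closed_UN_compact) auto
  have W_coset: "left_coset K y \<subseteq> W y" if "y \<in> Y" for y
    unfolding W_def using AC1 that by blast
  obtain A C where AC: "\<And>y. y \<in> Y \<Longrightarrow> open (A y) \<and> compact (C y) \<and>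
      left_coset K y \<subseteq> A y \<and> A y \<subseteq> C y \<and> C y \<subseteq> W y \<and> right_saturated K (A y)"
    using saturated_compact_nhds[OF lc K W_open W_coset] by blast
  have C_W: "C y \<subseteq> W y" if "y \<in> Y" for y
    using AC[OF that] by simp
  show thesis
  proof (rule that)
    show "y \<in> A y" if "y \<in> Y" for y
      using AC[OF that] left_coset_self[OF K(1)] by blast
    show "C y \<inter> Z = {}" if "y \<in> Y" for y
      using C_W[OF that] A1_C1[OF that] C1_avoids[OF that] unfolding W_def by blast
    show "disjoint_family_on C Y"
      unfolding disjoint_family_on_def
    proof (intro ballI impI)
      fix y y' assume "y \<in> Y" "y' \<in> Y" "y \<noteq> y'"
      then have "C y \<subseteq> - C1 y'" "C y' \<subseteq> C1 y'"
        using C_W A1_C1 unfolding W_def by blast+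
      then show "C y \<inter> C y' = {}"
        by blast
    qed
  qed (use AC in blast)+
qed

section \<open>Linear relations\<close>

lemma eq_0_if_max_is_subconvex_combination:
  fixes a :: "'i \<Rightarrow> 'a::real_normed_div_algebra"
  assumes "finite Y"
    and "\<And>j. j \<in> Y \<Longrightarrow> (\<And>y. y \<in> Y \<Longrightarrow> norm (a y) \<le> norm (a j)) \<Longrightarrow>
      \<exists>q. (\<forall>y\<in>Y. 0 \<le> q y) \<and> sum q Y < 1 \<and> a j = (\<Sum>y\<in>Y. of_real (q y) * a y)"
  shows "\<forall>y\<in>Y. a y = 0"
proof (cases "Y = {}")
  case False
  define m where "m = Max ((\<lambda>y. norm (a y)) ` Y)"
  have "m \<in> (\<lambda>y. norm (a y)) ` Y"
    unfolding m_def using assms(1) False by (intro Max_in) auto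
  then obtain j where j: "j \<in> Y" "norm (a j) = m"
    by auto
  have max: "norm (a y) \<le> norm (a j)" if "y \<in> Y" for y
    using Max_ge[of "(\<lambda>y. norm (a y)) ` Y"] assms(1) that j(2) unfolding m_def by simp
  obtain q where q: "\<forall>y\<in>Y. 0 \<le> q y" "sum q Y < 1" "a j = (\<Sum>y\<in>Y. of_real (q y) * a y)"
    using assms(2)[OF j(1) max] by blast
  have "norm (a j) \<le> (\<Sum>y\<in>Y. q y * norm (a y))"
    unfolding q(3) using q(1) by (auto intro!: order_trans[OF norm_sum] sum_mono simp: norm_mult)
  also have "\<dots> \<le> (\<Sum>y\<in>Y. q y * norm (a j))"
    using q(1) max by (intro sum_mono mult_left_mono) auto
  also have "\<dots> = sum q Y * norm (a j)"
    by (simp add: sum_distrib_right)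
  finally have "(1 - sum q Y) * norm (a j) \<le> 0"
    by (simp add: algebra_simps)
  then have "norm (a j) = 0"
    using q(2) by (simp add: mult_le_0_iff)
  then show ?thesis
    using max by (metis norm_eq_zero norm_le_zero_iff)
qed simp

lemma pivot_linear_relation:
  fixes v :: "'i \<Rightarrow> 'j \<Rightarrow> 'a::field" and b :: "'i \<Rightarrow> 'a"
  assumes "finite I" "i0 \<in> I" "v i0 g0 \<noteq> 0"
  defines "c \<equiv> \<lambda>i. if i = i0 then - (\<Sum>i\<in>I - {i0}. b i * v i g0) / v i0 g0 else b i"
  shows "(\<Sum>i\<in>I. c i * v i g) = (\<Sum>i\<in>I - {i0}. b i * (v i g - v i g0 / v i0 g0 * v i0 g))"
proof -
  have "(\<Sum>i\<in>I. c i * v i g) = c i0 * v i0 g + (\<Sum>i\<in>I - {i0}. b i * v i g)"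
    using assms(1,2) by (simp add: sum.remove c_def)
  moreover have "c i0 * v i0 g = - ((\<Sum>i\<in>I - {i0}. b i * v i g0) * (v i0 g / v i0 g0))"
    by (simp add: c_def)
  moreover have "(\<Sum>i\<in>I - {i0}. b i * (v i g - v i g0 / v i0 g0 * v i0 g)) =
      (\<Sum>i\<in>I - {i0}. b i * v i g) - (\<Sum>i\<in>I - {i0}. b i * v i g0) * (v i0 g / v i0 g0)"
    by (simp add: sum_distrib_right right_diff_distrib sum_subtractf mult.assoc sum_divide_distrib)
  ultimately show ?thesis
    by simp
qed

lemma exists_nontrivial_linear_relation:
  fixes v :: "'i \<Rightarrow> 'j \<Rightarrow> 'a::field"
  assumes "finite F" "finite I" "card F < card I"
  shows "\<exists>c. (\<exists>i\<in>I. c i \<noteq> 0) \<and> (\<forall>g\<in>F. (\<Sum>i\<in>I. c i * v i g) = 0)"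
  using assms
proof (induction F arbitrary: I v rule: finite_induct)
  case empty
  then show ?case
    by (intro exI[of _ "\<lambda>_. 1"]) (auto simp: card_gt_0_iff)
next
  case (insert g0 F)
  show ?case
  proof (cases "\<forall>i\<in>I. v i g0 = 0")
    case True
    then show ?thesis
      using insert.IH[of I v] insert.prems insert.hyps by auto
  next
    case False
    then obtain i0 where i0: "i0 \<in> I" "v i0 g0 \<noteq> 0"
      by blast
    define w where "w i g = v i g - v i g0 / v i0 g0 * v i0 g" for i g
    have "card (I - {i0}) = card I - 1"
      using i0(1) by (rule card_Diff_singleton)
    then have "card F < card (I - {i0})"
      using insert.prems(2) insert.hyps by simp
    then obtain b where b: "\<exists>i\<in>I - {i0}. b i \<noteq> 0" "\<forall>g\<in>F. (\<Sum>i\<in>I - {i0}. b i * w i g) = 0"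
      using insert.IH[of "I - {i0}" w] insert.prems(1) by blast
    define c where "c i = (if i = i0 then - (\<Sum>i\<in>I - {i0}. b i * v i g0) / v i0 g0 else b i)" for i
    have "(\<Sum>i\<in>I. c i * v i g) = (\<Sum>i\<in>I - {i0}. b i * w i g)" for g
      unfolding c_def w_def using pivot_linear_relation[where v = v, OF insert.prems(1) i0] by blast
    moreover have "w i g0 = 0" for i
      using i0(2) by (simp add: w_def)
    ultimately have "\<forall>g\<in>insert g0 F. (\<Sum>i\<in>I. c i * v i g) = 0"
      using b(2) by simp
    moreover have "\<exists>i\<in>I. c i \<noteq> 0"
      using b(1) by (auto simp: c_def)
    ultimately show ?thesis
      by blast
  qed
qed

definition ae_independent :: "'a measure \<Rightarrow> ('i \<Rightarrow> 'a \<Rightarrow> complex) \<Rightarrow> 'i set \<Rightarrow> bool" where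
  "ae_independent M f Y \<longleftrightarrow> (\<forall>a. (AE x in M. (\<Sum>y\<in>Y. a y * f y x) = 0) \<longrightarrow> (\<forall>y\<in>Y. a y = 0))"

lemma fin_dim_L1_card_ae_independent_le:
  assumes "fin_dim_L1 M V"
  obtains N where
    "\<And>Y f. finite Y \<Longrightarrow> (\<And>y. y \<in> Y \<Longrightarrow> f y \<in> V) \<Longrightarrow> ae_independent M f Y \<Longrightarrow> card Y \<le> N"
proof -
  obtain F where F: "finite F" "\<And>h. h \<in> V \<Longrightarrow> \<exists>c. AE x in M. h x = (\<Sum>g\<in>F. c g * g x)"
    using assms unfolding fin_dim_L1_def by blast
  show thesis
  proof (rule that)
    fix Y and f :: "'b \<Rightarrow> 'a \<Rightarrow> complex"
    assume Y: "finite Y" and f: "\<And>y. y \<in> Y \<Longrightarrow> f y \<in> V" and independent: "ae_independent M f Y"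
    obtain c where c: "\<And>y. y \<in> Y \<Longrightarrow> AE x in M. f y x = (\<Sum>g\<in>F. c y g * g x)"
      using F(2)[OF f] by metis
    show "card Y \<le> card F"
    proof (rule ccontr)
      assume "\<not> card Y \<le> card F"
      then obtain a where a: "\<exists>y\<in>Y. a y \<noteq> 0" "\<forall>g\<in>F. (\<Sum>y\<in>Y. a y * c y g) = 0"
        using exists_nontrivial_linear_relation[OF F(1) Y] by force
      have "AE x in M. \<forall>y\<in>Y. f y x = (\<Sum>g\<in>F. c y g * g x)"
        using Y c by (rule AE_finite_allI)
      then have "AE x in M. (\<Sum>y\<in>Y. a y * f y x) = 0"
      proof eventually_elim
        case (elim x)
        then have "(\<Sum>y\<in>Y. a y * f y x) = (\<Sum>g\<in>F. (\<Sum>y\<in>Y. a y * c y g) * g x)"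
          by (simp add: sum_distrib_left sum_distrib_right mult.assoc sum.swap[of _ F])
        then show ?case
          using a(2) by simp
      qed
      then show False
        using independent a(1) unfolding ae_independent_def by blast
    qed
  qed
qed

section \<open>Averaging over the compact subgroup\<close>

definition orbit_mean :: "'g::group_add measure \<Rightarrow> 'g set \<Rightarrow> 'g \<Rightarrow> real" where
  "orbit_mean lK A x = measure lK {k. - k + x \<in> A}"

definition mean_defect :: "'g::group_add measure \<Rightarrow> 'g set \<Rightarrow> 'g \<Rightarrow> real" where
  "mean_defect lK A x = indicator A x - orbit_mean lK A x"

lemma mean_defect_relation_pointwise:
  assumes "x \<in> A j" "\<And>y. y \<in> Y \<Longrightarrow> y \<noteq> j \<Longrightarrow> x \<notin> A y" "finite Y" "j \<in> Y"
    and "(\<Sum>y\<in>Y. a y * complex_of_real (mean_defect lK (A y) x)) = 0"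
  shows "a j = (\<Sum>y\<in>Y. of_real (orbit_mean lK (A y) x) * a y)"
proof -
  have "a y * complex_of_real (mean_defect lK (A y) x) =
      (if y = j then a y else 0) - of_real (orbit_mean lK (A y) x) * a y" if "y \<in> Y" for y
    using assms(1,2) that by (simp add: mean_defect_def algebra_simps)
  then have "(\<Sum>y\<in>Y. a y * complex_of_real (mean_defect lK (A y) x)) =
      (\<Sum>y\<in>Y. (if y = j then a y else 0) - of_real (orbit_mean lK (A y) x) * a y)"
    by (rule sum.cong[OF refl])
  also have "\<dots> = a j - (\<Sum>y\<in>Y. of_real (orbit_mean lK (A y) x) * a y)"
    using assms(3,4) by (simp add: sum_subtractf sum.delta)
  finally show ?thesis
    using assms(5) by simp
qed

lemma left_haar_onD:
  assumes "left_haar_on S M"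
  shows "sets M = sets borel" "emeasure M (- S) = 0"
    "\<And>x A. x \<in> S \<Longrightarrow> A \<in> sets borel \<Longrightarrow> emeasure M ((\<lambda>y. x + y) ` A) = emeasure M A"
    "\<And>C. compact C \<Longrightarrow> emeasure M C < \<infinity>"
    "\<And>U. open U \<Longrightarrow> U \<inter> S \<noteq> {} \<Longrightarrow> 0 < emeasure M U"
    "\<And>U. open U \<Longrightarrow> emeasure M U = (SUP C\<in>{C. compact C \<and> C \<subseteq> U}. emeasure M C)"
  using assms unfolding left_haar_on_def by metis+

locale compact_subgroup_haar =
  fixes hG lK :: "'g::{topological_group_add, t2_space} measure" and K :: "'g set"
  assumes subgroup: "subgroup_of K" and compact: "compact K"
    and haar_G: "left_haar_on UNIV hG" and haar_K: "left_haar_on K lK"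
    and normalized: "emeasure lK K = 1"
begin

lemma sets_lK [measurable_cong]: "sets lK = sets borel"
  and sets_hG [measurable_cong]: "sets hG = sets borel"
  using left_haar_onD(1) haar_K haar_G by blast+

lemma space_lK [simp]: "space lK = UNIV"
  and space_hG [simp]: "space hG = UNIV"
  using sets_eq_imp_space_eq[OF sets_lK] sets_eq_imp_space_eq[OF sets_hG] by simp_all

lemmas emeasure_lK_outside = left_haar_onD(2)[OF haar_K]
  and emeasure_lK_translation = left_haar_onD(3)[OF haar_K]
  and emeasure_lK_open_pos = left_haar_onD(5)[OF haar_K]
  and emeasure_lK_inner_regular = left_haar_onD(6)[OF haar_K]
  and emeasure_hG_compact_finite = left_haar_onD(4)[OF haar_G]

lemma emeasure_hG_open_pos: "open U \<Longrightarrow> U \<noteq> {} \<Longrightarrow> 0 < emeasure hG U"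
  using left_haar_onD(5)[OF haar_G] by simp

lemma K_sets: "K \<in> sets lK"
  by (simp add: sets_lK borel_closed compact_imp_closed[OF compact])

lemma compl_K_sets: "- K \<in> sets lK"
  by (simp add: sets_lK borel_open open_Compl compact_imp_closed[OF compact])

lemma emeasure_lK_UNIV: "emeasure lK UNIV = 1"
proof -
  have "emeasure lK (K \<union> - K) = emeasure lK K + emeasure lK (- K)"
    using K_sets compl_K_sets by (intro plus_emeasure[symmetric]) auto
  then show ?thesis
    using normalized emeasure_lK_outside by simp
qed

sublocale lK: finite_measure lK
  by standard (simp add: emeasure_lK_UNIV)

lemma measure_lK_UNIV [simp]: "measure lK UNIV = 1"
  by (simp add: measure_def emeasure_lK_UNIV)

lemma measure_lK_le_1: "measure lK A \<le> 1"
  using lK.bounded_measure[of A] by simp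

lemma AE_lK_mem: "AE k in lK. k \<in> K"
proof (rule AE_I')
  show "- K \<in> null_sets lK"
    using emeasure_lK_outside compl_K_sets by auto
qed auto

lemma AE_hG_ex_in_open:
  assumes "AE x in hG. P x" "open U" "U \<noteq> {}"
  shows "\<exists>x\<in>U. P x"
proof (rule ccontr)
  assume none: "\<not> (\<exists>x\<in>U. P x)"
  have "AE x in hG. x \<notin> U"
    using assms(1) by eventually_elim (use none in blast)
  then have "emeasure hG U = 0"
    using assms(2) sets_hG by (subst AE_iff_measurable[symmetric]) auto
  then show False
    using emeasure_hG_open_pos[OF assms(2,3)] by simp
qed

lemma orbit_mean_nonneg: "0 \<le> orbit_mean lK A x"
  unfolding orbit_mean_def by (rule measure_nonneg)

lemma orbit_mean_le_1: "orbit_mean lK A x \<le> 1"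
  unfolding orbit_mean_def by (rule measure_lK_le_1)

lemma orbit_set_sets: "open A \<Longrightarrow> {k. - k + x \<in> A} \<in> sets lK"
  by (simp add: sets_lK borel_open open_orbit_set)

lemma open_orbit_mean_greater:
  assumes "open A"
  shows "open {x. a < orbit_mean lK A x}"
proof (cases "a < 0")
  case True
  then have "{x. a < orbit_mean lK A x} = UNIV"
    using orbit_mean_nonneg less_le_trans by blast
  then show ?thesis
    by simp
next
  case False
  show ?thesis
  proof (subst open_subopen, intro ballI)
    fix x0 assume "x0 \<in> {x. a < orbit_mean lK A x}"
    then have "ennreal a < emeasure lK {k. - k + x0 \<in> A}"
      using False by (simp add: orbit_mean_def lK.emeasure_eq_measure ennreal_less_iff)
    then obtain D where D: "compact D" "D \<subseteq> {k. - k + x0 \<in> A}" "ennreal a < emeasure lK D"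
      unfolding emeasure_lK_inner_regular[OF open_orbit_set[OF assms]] less_SUP_iff by blast
    define T where "T = {x. \<forall>c\<in>D. - c + x \<in> A}"
    have "open T"
      unfolding T_def using D(1) assms by (rule open_Collect_Ball_compact) (intro continuous_intros)
    moreover have "x0 \<in> T"
      using D(2) unfolding T_def by blast
    moreover have "T \<subseteq> {x. a < orbit_mean lK A x}"
    proof
      fix x assume "x \<in> T"
      then have "measure lK D \<le> orbit_mean lK A x"
        unfolding orbit_mean_def T_def using orbit_set_sets[OF assms]
        by (intro lK.finite_measure_mono) auto
      moreover have "a < measure lK D"
        using D(3) False by (simp add: lK.emeasure_eq_measure ennreal_less_iff)
      ultimately show "x \<in> {x. a < orbit_mean lK A x}"
        by simp
    qed
    ultimately show "\<exists>T. open T \<and> x0 \<in> T \<and> T \<subseteq> {x. a < orbit_mean lK A x}"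
      by blast
  qed
qed

lemma borel_measurable_orbit_mean: "open A \<Longrightarrow> orbit_mean lK A \<in> borel_measurable borel"
  by (auto simp: borel_measurable_iff_greater intro: borel_open open_orbit_mean_greater)

lemma conv_left_indicator:
  "open A \<Longrightarrow> conv_left lK (\<lambda>y. of_real (indicator A y)) x = of_real (orbit_mean lK A x)"
proof -
  have "(\<integral>k. indicator A (- k + x) \<partial>lK) = (\<integral>k. indicator {k. - k + x \<in> A} k \<partial>lK :: real)"
    by (rule Bochner_Integration.integral_cong) (auto simp: indicator_def)
  then show ?thesis
    unfolding conv_left_def orbit_mean_def by simp
qed

lemma orbit_mean_left_invariant:
  assumes "open A" "k \<in> K"
  shows "orbit_mean lK A (- k + x) = orbit_mean lK A x"
proof -
  have "{j. - j + (- k + x) \<in> A} = (\<lambda>j. - k + j) ` {j. - j + x \<in> A}"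
  proof (intro set_eqI iffI)
    fix j assume "j \<in> {j. - j + (- k + x) \<in> A}"
    then have "k + j \<in> {j. - j + x \<in> A}"
      by (simp add: minus_add add.assoc del: add_uminus_conv_diff)
    then show "j \<in> (\<lambda>j. - k + j) ` {j. - j + x \<in> A}"
      by (rule rev_image_eqI) (simp add: add.assoc[symmetric])
  qed (auto simp: minus_add add.assoc simp del: add_uminus_conv_diff)
  then show ?thesis
    unfolding orbit_mean_def measure_def
    using emeasure_lK_translation[of "- k"] subgroup_of_uminus[OF subgroup assms(2)]
      orbit_set_sets[OF assms(1)] sets_lK by simp
qed

lemma orbit_mean_right_invariant:
  assumes "right_saturated K A" "k \<in> K"
  shows "orbit_mean lK A (x + k) = orbit_mean lK A x"
  unfolding orbit_mean_def
  using right_saturated_add_iff[OF subgroup assms, of "- _ + x"] by (simp add: add.assoc)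

lemma orbit_mean_eq_0: "x \<notin> K + A \<Longrightarrow> orbit_mean lK A x = 0"
proof -
  assume "x \<notin> K + A"
  then have "{k. - k + x \<in> A} \<subseteq> - K"
    by (auto dest: set_plus_intro[of _ K "- _ + x" A] simp: add.assoc)
  then have "emeasure lK {k. - k + x \<in> A} \<le> emeasure lK (- K)"
    using compl_K_sets by (rule emeasure_mono)
  then have "emeasure lK {k. - k + x \<in> A} = 0"
    using emeasure_lK_outside by simp
  then show ?thesis
    by (simp add: orbit_mean_def measure_def)
qed

lemma borel_measurable_lK_compose_continuous:
  assumes "f \<in> borel_measurable borel" "continuous_on UNIV g"
  shows "(\<lambda>k. f (g k)) \<in> borel_measurable lK"
  using measurable_compose[OF borel_measurable_continuous_onI[OF assms(2)] assms(1)]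
  by (simp add: measurable_cong_sets[OF sets_lK refl])

lemma borel_measurable_mean_defect: "open A \<Longrightarrow> mean_defect lK A \<in> borel_measurable borel"
  unfolding mean_defect_def[abs_def]
  by (intro borel_measurable_diff borel_measurable_indicator borel_open borel_measurable_orbit_mean)

lemma abs_mean_defect_le: "\<bar>mean_defect lK A x\<bar> \<le> indicator (K + A) x"
proof (cases "x \<in> K + A")
  case True
  then show ?thesis
    using orbit_mean_nonneg[of A x] orbit_mean_le_1[of A x]
    by (auto simp: mean_defect_def indicator_def)
next
  case False
  moreover have "x \<notin> A"
    using False set_plus_intro[OF subgroup_of_zero[OF subgroup], of x A] by auto
  ultimately show ?thesis
    by (simp add: mean_defect_def orbit_mean_eq_0)
qed

lemma integrable_mean_defect:
  assumes "open A" "A \<subseteq> C" "compact C"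
  shows "integrable hG (\<lambda>x. complex_of_real (mean_defect lK A x))"
proof (rule Bochner_Integration.integrable_bound)
  have "compact (K + C)"
    using compact assms(3) by (rule compact_set_plus)
  then show "integrable hG (indicator (K + C) :: 'g \<Rightarrow> real)"
    using emeasure_hG_compact_finite sets_hG
    by (intro integrable_real_indicator) (auto intro: borel_closed compact_imp_closed)
  show "(\<lambda>x. complex_of_real (mean_defect lK A x)) \<in> borel_measurable hG"
    using borel_measurable_mean_defect[OF assms(1)] sets_hG by measurable
  have "indicator (K + A) x \<le> (indicator (K + C) x :: real)" for x
    using set_plus_mono2[OF order_refl assms(2)] by (auto simp: indicator_def)
  then show "AE x in hG. norm (complex_of_real (mean_defect lK A x)) \<le> norm (indicator (K + C) x :: real)"
    using abs_mean_defect_le order_trans by fastforce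
qed

lemma mean_defect_right_invariant:
  assumes "right_saturated K A" "k \<in> K"
  shows "mean_defect lK A (x + k) = mean_defect lK A x"
  using right_saturated_add_iff[OF subgroup assms] orbit_mean_right_invariant[OF assms]
  by (simp add: mean_defect_def indicator_def)

lemma conv_right_mean_defect:
  assumes "open A" "right_saturated K A"
  shows "conv_right (\<lambda>x. complex_of_real (mean_defect lK A x)) lK = (\<lambda>x. complex_of_real (mean_defect lK A x))"
proof
  fix x
  have "AE k in lK. complex_of_real (mean_defect lK A (x - k)) = complex_of_real (mean_defect lK A x)"
    using AE_lK_mem
  proof eventually_elim
    case (elim k)
    then show ?case
      using mean_defect_right_invariant[OF assms(2) subgroup_of_uminus[OF subgroup elim]] by simp
  qed
  moreover have "(\<lambda>k. complex_of_real (mean_defect lK A (x - k))) \<in> borel_measurable lK"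
    using borel_measurable_mean_defect[OF assms(1)]
    by (intro borel_measurable_lK_compose_continuous) (auto intro: continuous_intros)
  ultimately have "(\<integral>k. complex_of_real (mean_defect lK A (x - k)) \<partial>lK) =
      (\<integral>k. complex_of_real (mean_defect lK A x) \<partial>lK)"
    by (intro integral_cong_AE) auto
  then show "conv_right (\<lambda>x. complex_of_real (mean_defect lK A x)) lK x =
      complex_of_real (mean_defect lK A x)"
    by (simp add: conv_right_def)
qed

lemma conv_left_mean_defect:
  assumes "open A"
  shows "conv_left lK (\<lambda>x. complex_of_real (mean_defect lK A x)) x = 0"
proof -
  have meas_ind: "(\<lambda>k. indicator A (- k + x) :: real) \<in> borel_measurable lK"
    by (intro borel_measurable_lK_compose_continuous[where g = "\<lambda>k. - k + x"]
        borel_measurable_indicator borel_open assms continuous_intros)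
  have meas_mean: "(\<lambda>k. orbit_mean lK A (- k + x)) \<in> borel_measurable lK"
    by (intro borel_measurable_lK_compose_continuous[where g = "\<lambda>k. - k + x"]
        borel_measurable_orbit_mean assms continuous_intros)
  have "(\<integral>k. orbit_mean lK A (- k + x) \<partial>lK) = (\<integral>k. orbit_mean lK A x \<partial>lK)"
    using AE_lK_mem meas_mean
    by (intro integral_cong_AE) (auto elim!: eventually_mono simp: orbit_mean_left_invariant[OF assms])
  moreover have "(\<integral>k. indicator A (- k + x) \<partial>lK) = orbit_mean lK A x"
    using conv_left_indicator[OF assms, of x] unfolding conv_left_def by simp
  moreover have "integrable lK (\<lambda>k. indicator A (- k + x) :: real)"
    using meas_ind by (intro lK.integrable_const_bound[where B = 1]) auto
  moreover have "integrable lK (\<lambda>k. orbit_mean lK A (- k + x))"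
    using meas_mean orbit_mean_nonneg orbit_mean_le_1
    by (intro lK.integrable_const_bound[where B = 1]) auto
  ultimately show ?thesis
    unfolding conv_left_def mean_defect_def by simp
qed

lemma mean_defect_mem_L_K0:
  assumes "open A" "right_saturated K A" "A \<subseteq> C" "compact C"
  shows "(\<lambda>x. complex_of_real (mean_defect lK A x)) \<in> L_K0 hG lK"
  unfolding L_K0_def L1_quot_def
  using integrable_mean_defect[OF assms(1,3,4)] conv_right_mean_defect[OF assms(1,2)]
    conv_left_mean_defect[OF assms(1)] by force

lemma sum_orbit_mean_less_1:
  assumes Y: "finite Y" and A: "\<And>y. y \<in> Y \<Longrightarrow> open (A y)" "\<And>y. y \<in> Y \<Longrightarrow> A y \<subseteq> C y"
    and C: "\<And>y. y \<in> Y \<Longrightarrow> compact (C y)" "disjoint_family_on C Y"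
    and k: "k \<in> K" "- k + x \<notin> (\<Union>y\<in>Y. C y)"
  shows "(\<Sum>y\<in>Y. orbit_mean lK (A y) x) < 1"
proof -
  define E where "E y = {j. - j + x \<in> A y}" for y
  define S where "S = {j. - j + x \<in> - (\<Union>y\<in>Y. C y)}"
  have closed: "closed (\<Union>y\<in>Y. C y)"
    using Y C(1) by (rule closed_UN_compact)
  have E_sets: "E ` Y \<subseteq> sets lK"
    unfolding E_def using A(1) orbit_set_sets by blast
  have "disjoint_family_on E Y"
    using A(2) C(2) unfolding disjoint_family_on_def E_def by blast
  then have "(\<Sum>y\<in>Y. orbit_mean lK (A y) x) = measure lK (\<Union>y\<in>Y. E y)"
    unfolding orbit_mean_def E_def[symmetric]
    using lK.finite_measure_finite_Union[OF Y E_sets] by simp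
  moreover have "measure lK (\<Union>y\<in>Y. E y) + measure lK S \<le> 1"
  proof -
    have "S \<in> sets lK"
      unfolding S_def by (intro orbit_set_sets open_Compl closed)
    moreover have "(\<Union>y\<in>Y. E y) \<in> sets lK"
      using Y E_sets by blast
    moreover have "(\<Union>y\<in>Y. E y) \<inter> S = {}"
      using A(2) unfolding E_def S_def by blast
    ultimately show ?thesis
      using lK.finite_measure_Union measure_lK_le_1 by metis
  qed
  moreover have "0 < measure lK S"
  proof -
    have "open S"
      unfolding S_def by (intro open_orbit_set open_Compl closed)
    moreover have "k \<in> S \<inter> K"
      using k unfolding S_def by simp
    ultimately show ?thesis
      using emeasure_lK_open_pos[of S] by (auto simp: lK.emeasure_eq_measure)
  qed
  ultimately show ?thesis
    by linarith
qed

lemma mean_defects_independent: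
  assumes Y: "finite Y"
    and A: "\<And>y. y \<in> Y \<Longrightarrow> open (A y)" "\<And>y. y \<in> Y \<Longrightarrow> y \<in> A y" "\<And>y. y \<in> Y \<Longrightarrow> A y \<subseteq> C y"
    and C: "\<And>y. y \<in> Y \<Longrightarrow> compact (C y)" "disjoint_family_on C Y"
    and kk: "\<And>y. y \<in> Y \<Longrightarrow> kk y \<in> K" "\<And>y. y \<in> Y \<Longrightarrow> kk y + y \<notin> (\<Union>y\<in>Y. C y)"
  shows "ae_independent hG (\<lambda>y x. complex_of_real (mean_defect lK (A y) x)) Y"
  unfolding ae_independent_def
proof (intro allI impI)
  fix a assume relation: "AE x in hG. (\<Sum>y\<in>Y. a y * complex_of_real (mean_defect lK (A y) x)) = 0"
  have closed_C: "closed (\<Union>y\<in>Y. C y)"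
    using Y C(1) by (rule closed_UN_compact)
  show "\<forall>y\<in>Y. a y = 0"
  proof (rule eq_0_if_max_is_subconvex_combination[OF Y])
    fix j assume j: "j \<in> Y"
    define R where "R = A j \<inter> (\<lambda>x. kk j + x) -` (- (\<Union>y\<in>Y. C y))"
    have "open R"
      unfolding R_def
      by (intro open_Int A(1)[OF j] open_vimage[OF open_Compl[OF closed_C]] continuous_intros)
    moreover have "j \<in> R"
      unfolding R_def using A(2)[OF j] kk(2)[OF j] by simp
    ultimately obtain x where x: "x \<in> R"
      and zero: "(\<Sum>y\<in>Y. a y * complex_of_real (mean_defect lK (A y) x)) = 0"
      using AE_hG_ex_in_open[OF relation] by blast
    have "x \<in> A j"
      using x by (simp add: R_def)
    moreover have "x \<notin> A y" if "y \<in> Y" "y \<noteq> j" for y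
      using \<open>x \<in> A j\<close> A(3) C(2) j that unfolding disjoint_family_on_def by blast
    ultimately have "a j = (\<Sum>y\<in>Y. of_real (orbit_mean lK (A y) x) * a y)"
      using Y j zero by (rule mean_defect_relation_pointwise)
    moreover have "(\<Sum>y\<in>Y. orbit_mean lK (A y) x) < 1"
    proof (rule sum_orbit_mean_less_1[OF Y A(1,3) C])
      show "- kk j \<in> K"
        using subgroup_of_uminus[OF subgroup kk(1)[OF j]] .
      show "- (- kk j) + x \<notin> (\<Union>y\<in>Y. C y)"
        using x unfolding R_def by simp
    qed
    ultimately show "\<exists>q. (\<forall>y\<in>Y. 0 \<le> q y) \<and> sum q Y < 1 \<and> a j = (\<Sum>y\<in>Y. of_real (q y) * a y)"
      using orbit_mean_nonneg by (intro exI[of _ "\<lambda>y. orbit_mean lK (A y) x"]) auto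
  qed
qed

lemma large_independent_family_in_L_K0:
  assumes lc: "locally_compact_space (euclidean :: 'g topology)"
    and not_normal: "\<not> (\<forall>x. \<forall>k\<in>K. x + k - x \<in> K)"
    and infinite: "infinite (range (left_coset K))"
  obtains Y and A :: "'g \<Rightarrow> 'g set" where "finite Y" "card Y = n"
    "\<And>y. y \<in> Y \<Longrightarrow> (\<lambda>x. complex_of_real (mean_defect lK (A y) x)) \<in> L_K0 hG lK"
    "ae_independent hG (\<lambda>y x. complex_of_real (mean_defect lK (A y) x)) Y"
proof -
  obtain Y where Y: "finite Y" "card Y = n" "escaping_cosets K Y"
    using escaping_cosets_exist[OF subgroup not_normal infinite] by blast
  obtain kk where kk: "\<And>y. y \<in> Y \<Longrightarrow> kk y \<in> K"
    and kk_escape: "\<And>y. y \<in> Y \<Longrightarrow> left_coset K (kk y + y) \<notin> left_coset K ` Y"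
    using Y(3) unfolding escaping_cosets_def by metis
  define Z where "Z = (\<Union>y\<in>Y. left_coset K (kk y + y))"
  have "closed Z"
    unfolding Z_def using Y(1) compact_left_coset[OF compact] by (rule closed_UN_compact)
  moreover have "left_coset K y \<inter> Z = {}" if "y \<in> Y" for y
    unfolding Z_def using left_coset_disjoint[OF subgroup] kk_escape that by blast
  moreover have "inj_on (left_coset K) Y"
    using Y(3) unfolding escaping_cosets_def by blast
  ultimately obtain A C where AC: "\<And>y. y \<in> Y \<Longrightarrow> open (A y)" "\<And>y. y \<in> Y \<Longrightarrow> compact (C y)"
      "\<And>y. y \<in> Y \<Longrightarrow> y \<in> A y" "\<And>y. y \<in> Y \<Longrightarrow> A y \<subseteq> C y" "\<And>y. y \<in> Y \<Longrightarrow> C y \<inter> Z = {}"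
      "\<And>y. y \<in> Y \<Longrightarrow> right_saturated K (A y)" "disjoint_family_on C Y"
    using disjoint_saturated_compact_nhds[OF lc subgroup compact Y(1)] by blast
  have kk_C: "kk y + y \<notin> (\<Union>y\<in>Y. C y)" if "y \<in> Y" for y
  proof -
    have "kk y + y \<in> Z"
      unfolding Z_def using left_coset_self[OF subgroup] that by blast
    then show ?thesis
      using AC(5) by blast
  qed
  show thesis
  proof (rule that[OF Y(1,2)])
    show "(\<lambda>x. complex_of_real (mean_defect lK (A y) x)) \<in> L_K0 hG lK" if "y \<in> Y" for y
      using AC(1,6,4,2)[OF that] by (rule mean_defect_mem_L_K0)
    show "ae_independent hG (\<lambda>y x. complex_of_real (mean_defect lK (A y) x)) Y"
      using Y(1) AC(1,3,4,2,7) kk kk_C by (rule mean_defects_independent)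
  qed
qed

end

theorem lemma4:
  fixes hG lK :: "'g::{topological_group_add, t2_space} measure"
    and K :: "'g set"
  assumes "locally_compact_space (euclidean :: 'g topology)"
    and "compact K" and "subgroup_of K"
    and "left_haar_on UNIV hG"
    and "left_haar_on K lK" and "emeasure lK K = 1"
    and "fin_dim_L1 hG (L_K0 hG lK)"
  shows "(\<forall>x. \<forall>k\<in>K. x + k - x \<in> K) \<or> finite (range (\<lambda>x. (\<lambda>k. x + k) ` K))"
proof (rule ccontr)
  interpret compact_subgroup_haar hG lK K
    using assms(2-6) by unfold_locales
  assume "\<not> ?thesis"
  then have not_normal: "\<not> (\<forall>x. \<forall>k\<in>K. x + k - x \<in> K)"
    and infinite: "infinite (range (left_coset K))"
    by (simp_all add: left_coset_def[abs_def])
  obtain N where N: "\<And>(Y :: 'g set) f. finite Y \<Longrightarrow> (\<And>y. y \<in> Y \<Longrightarrow> f y \<in> L_K0 hG lK) \<Longrightarrow>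
      ae_independent hG f Y \<Longrightarrow> card Y \<le> N"
    using fin_dim_L1_card_ae_independent_le[OF assms(7)] by blast
  obtain Y and A :: "'g \<Rightarrow> 'g set" where Y: "finite Y" "card Y = Suc N"
    and mem: "\<And>y. y \<in> Y \<Longrightarrow> (\<lambda>x. complex_of_real (mean_defect lK (A y) x)) \<in> L_K0 hG lK"
    and independent: "ae_independent hG (\<lambda>y x. complex_of_real (mean_defect lK (A y) x)) Y"
    using large_independent_family_in_L_K0[OF assms(1) not_normal infinite, where n = "Suc N"]
    by blast
  have "card Y \<le> N"
    using N[OF Y(1) mem independent] .
  then show False
    using Y(2) by simp
qed

end
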